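(* Let $q$ be a power of a prime $p$, $M,N$ positive integers coprime to $p$, $\lambda_1,\lambda_2\in\mathbb{F}_q^{\ast}$, and let $\mathbb{F}_{q^m}$ be an extension field containing $\gamma,\beta$ with $\gamma^M=\lambda_1$, $\beta^N=\lambda_2$, a primitive $M$-th root of unity $\zeta_1$ and a primitive $N$-th root of unity $\zeta_2$. Let $\Omega=\{(i,j):0\le i\le M-1,\ 0\le j\le N-1\}$. Let $\mathcal{C}$ be a 2-D $(\lambda_1,\lambda_2)$-constacyclic code of area $M\times N$ over $\mathbb{F}_q$ with minimum distance $d$ and common zero set $V_c$. Let $\widetilde{\mathbb{E}}=\{(\theta,\phi)\in\Omega:(\gamma\zeta_1^{\theta},\beta\zeta_2^{\phi})\in V_c\}$ and write $\Omega\setminus\widetilde{\mathbb{E}}=\{(\theta_1,\phi_1),\dots,(\theta_{s'},\phi_{s'})\}$, $s'=MN-|V_c|$. Let $c\in\mathcal{C}$, and let $e$ be an $M\times N$ array over $\mathbb{F}_q$ whose set of nonzero positions $\mathbb{E}$ satisfies $1\le t:=|\mathbb{E}|\le\lfloor(d-1)/2\rfloor$; write $\Omega\setminus\mathbb{E}=\{(i_1,j_1),\dots,(i_{t'},j_{t'})\}$. Let $r=c+e$, let $R=(R_{\theta,\phi})$ with $R_{\theta,\phi}=\sum_{i,j}r_{i,j}(\gamma\zeta_1^{\theta})^i(\beta\zeta_2^{\phi})^j$, and $R(x,y)=\sum_{(\theta,\phi)\in\Omega}R_{\theta,\phi}x^{\theta}y^{\phi}$. Then the linear system $AX=B$ in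 the unknowns $X=(X_1,\dots,X_{s'})^T$, where $A$ is the $t'\times s'$ matrix with entries $A_{l,k}=\zeta_1^{-i_l\theta_k}\zeta_2^{-j_l\phi_k}$ and $B=(R(\zeta_1^{-i_1},\zeta_2^{-j_1}),\dots,R(\zeta_1^{-i_{t'}},\zeta_2^{-j_{t'}}))^T$, has a unique solution (namely $X_k=C_{\theta_k,\phi_k}$, the entries of the spectrum of $c$ outside the spectral nulls).
   Context: An $M\times N$ array $c=(c_{i,j})$ over $\mathbb{F}_q$ is identified with $c(x,y)=\sum_{i,j}c_{i,j}x^iy^j$; its spectrum is $C_{\theta,\phi}=\sum_{i,j}c_{i,j}(\gamma\zeta_1^{\theta})^i(\beta\zeta_2^{\phi})^j$. A 2-D $(\lambda_1,\lambda_2)$-constacyclic code of area $M\times N$ over $\mathbb{F}_q$ is an $\mathbb{F}_q$-linear subspace of $M\times N$ arrays closed under the column $\lambda_1$-constacyclic shift (row $0$ becomes $\lambda_1$ times row $M-1$, row $i$ becomes row $i-1$) and the row $\lambda_2$-constacyclic shift (column $0$ becomes $\lambda_2$ times column $N-1$, column $j$ becomes column $j-1$); equivalently an ideal of $\mathbb{F}_q[x,y]/\langle x^M-\lambda_1,y^N-\lambda_2\rangle$. Let $V_\circ=\{(a,b): a^M=\lambda_1,\ b^N=\lambda_2\}$ and $V_1$ the set of common roots of all $c(x,y)$, $c\in\mathcal{C}$; the common zero set is $V_c=V_\circ\cap V_1$. The minimum distance is the least Hamming weight of a nonzero codeword. *)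

theory Defs
  imports "Jordan_Normal_Form.Matrix"
begin

definition arrays :: "nat \<Rightarrow> nat \<Rightarrow> (nat \<Rightarrow> nat \<Rightarrow> 'a::zero) set" where
  "arrays M N = {a. \<forall>i j. (M \<le> i \<or> N \<le> j) \<longrightarrow> a i j = 0}"

definition Omega :: "nat \<Rightarrow> nat \<Rightarrow> (nat \<times> nat) set" where
  "Omega M N = {0..<M} \<times> {0..<N}"

definition col_shift :: "nat \<Rightarrow> nat \<Rightarrow> 'a::field \<Rightarrow> (nat \<Rightarrow> nat \<Rightarrow> 'a) \<Rightarrow> (nat \<Rightarrow> nat \<Rightarrow> 'a)" where
  "col_shift M N l a = (\<lambda>i j. if i < M \<and> j < N then
      (if i = 0 then l * a (M - 1) j else a (i - 1) j) else 0)"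

definition row_shift :: "nat \<Rightarrow> nat \<Rightarrow> 'a::field \<Rightarrow> (nat \<Rightarrow> nat \<Rightarrow> 'a) \<Rightarrow> (nat \<Rightarrow> nat \<Rightarrow> 'a)" where
  "row_shift M N l a = (\<lambda>i j. if i < M \<and> j < N then
      (if j = 0 then l * a i (N - 1) else a i (j - 1)) else 0)"

definition constacyclic_code_2D ::
  "nat \<Rightarrow> nat \<Rightarrow> 'a::field \<Rightarrow> 'a \<Rightarrow> (nat \<Rightarrow> nat \<Rightarrow> 'a) set \<Rightarrow> bool" where
  "constacyclic_code_2D M N l1 l2 C \<longleftrightarrow>
     C \<subseteq> arrays M N \<and>
     (\<lambda>i j. 0) \<in> C \<and>
     (\<forall>a\<in>C. \<forall>b\<in>C. (\<lambda>i j. a i j + b i j) \<in> C) \<and>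
     (\<forall>k. \<forall>a\<in>C. (\<lambda>i j. k * a i j) \<in> C) \<and>
     (\<forall>a\<in>C. col_shift M N l1 a \<in> C) \<and>
     (\<forall>a\<in>C. row_shift M N l2 a \<in> C)"

definition hamming_weight :: "nat \<Rightarrow> nat \<Rightarrow> (nat \<Rightarrow> nat \<Rightarrow> 'a::zero) \<Rightarrow> nat" where
  "hamming_weight M N a = card {(i, j). i < M \<and> j < N \<and> a i j \<noteq> 0}"

definition min_distance :: "nat \<Rightarrow> nat \<Rightarrow> (nat \<Rightarrow> nat \<Rightarrow> 'a::zero) set \<Rightarrow> nat" where
  "min_distance M N C =
     (LEAST w. \<exists>a\<in>C. a \<noteq> (\<lambda>i j. 0) \<and> hamming_weight M N a = w)"

definition array_eval :: "nat \<Rightarrow> nat \<Rightarrow> (nat \<Rightarrow> nat \<Rightarrow> 'a::comm_ring_1) \<Rightarrow> 'a \<Rightarrow> 'a \<Rightarrow> 'a" where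
  "array_eval M N a x y = (\<Sum>i<M. \<Sum>j<N. a i j * x ^ i * y ^ j)"

definition field_embedding :: "('k::field \<Rightarrow> 'K::field) \<Rightarrow> bool" where
  "field_embedding h \<longleftrightarrow> inj h \<and> h 0 = 0 \<and> h 1 = 1 \<and>
     (\<forall>a b. h (a + b) = h a + h b) \<and> (\<forall>a b. h (a * b) = h a * h b)"

definition primitive_root_of_unity :: "nat \<Rightarrow> 'a::field \<Rightarrow> bool" where
  "primitive_root_of_unity n z \<longleftrightarrow> z ^ n = 1 \<and> (\<forall>k. 0 < k \<and> k < n \<longrightarrow> z ^ k \<noteq> 1)"

definition V_circ :: "('k::field \<Rightarrow> 'K::field) \<Rightarrow> nat \<Rightarrow> nat \<Rightarrow> 'k \<Rightarrow> 'k \<Rightarrow> ('K \<times> 'K) set" where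
  "V_circ h M N l1 l2 = {(a, b). a ^ M = h l1 \<and> b ^ N = h l2}"

definition V_one :: "('k::field \<Rightarrow> 'K::field) \<Rightarrow> nat \<Rightarrow> nat \<Rightarrow> (nat \<Rightarrow> nat \<Rightarrow> 'k) set \<Rightarrow> ('K \<times> 'K) set" where
  "V_one h M N C = {(a, b). \<forall>c\<in>C. array_eval M N (\<lambda>i j. h (c i j)) a b = 0}"

definition common_zero_set ::
  "('k::field \<Rightarrow> 'K::field) \<Rightarrow> nat \<Rightarrow> nat \<Rightarrow> 'k \<Rightarrow> 'k \<Rightarrow> (nat \<Rightarrow> nat \<Rightarrow> 'k) set \<Rightarrow> ('K \<times> 'K) set" where
  "common_zero_set h M N l1 l2 C = V_circ h M N l1 l2 \<inter> V_one h M N C"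

definition spectrum2 :: "('k::field \<Rightarrow> 'K::field) \<Rightarrow> nat \<Rightarrow> nat \<Rightarrow> 'K \<Rightarrow> 'K \<Rightarrow> 'K \<Rightarrow> 'K \<Rightarrow>
     (nat \<Rightarrow> nat \<Rightarrow> 'k) \<Rightarrow> nat \<Rightarrow> nat \<Rightarrow> 'K" where
  "spectrum2 h M N gamma beta z1 z2 c = (\<lambda>\<theta> \<phi>.
     array_eval M N (\<lambda>i j. h (c i j)) (gamma * z1 ^ \<theta>) (beta * z2 ^ \<phi>))"

end

theory Submission
  imports Defs
begin

text \<open>
  The inversion formula of the 2-D DFT, R(\<zeta>1^-i, \<zeta>2^-j) = MN \<gamma>^i \<beta>^j r(i,j), shows that the
  spectrum of c solves AX = B: on error-free positions r = c, and the spectrum of c vanishes at the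
  common zeros.

  For uniqueness let AZ = 0. At every point of V_o outside the common zeros some codeword has a
  nonzero spectral value, so multiplying codewords by interpolating polynomials (that is, taking
  linear combinations of shifts) yields an array u in the extension of C to F_{q^m} whose spectrum
  is Z there and 0 at the common zeros. By inversion, AZ = 0 says that u vanishes at all error-free
  positions, so u is supported on t < d positions. An F_q-linear functional F_{q^m} \<rightarrow> F_q that is
  nonzero on an entry of u would turn u into a nonzero codeword of weight less than d; hence u = 0,
  and so Z = 0.
\<close>

section \<open>Roots of unity and DFT inversion\<close>

lemma primitive_root_of_unity_nonzero:
  assumes "primitive_root_of_unity n z" "0 < n"
  shows "z \<noteq> 0"
  using assms unfolding primitive_root_of_unity_def by (auto simp: zero_power)

lemma primitive_root_of_unity_power_inj:
  fixes z :: "'a::field"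
  assumes z: "primitive_root_of_unity n z" and "a < n" "b < n" "z ^ a = z ^ b"
  shows "a = b"
proof -
  have no_smaller: False if "a' < b'" "b' < n" "z ^ a' = z ^ b'" for a' b'
  proof -
    have "z \<noteq> 0" using primitive_root_of_unity_nonzero[OF z] that by simp
    have "z ^ a' * z ^ (b' - a') = z ^ b'"
      using that(1) by (simp flip: power_add)
    then have "z ^ (b' - a') = 1" using that(3) \<open>z \<noteq> 0\<close> by simp
    then show False using z that unfolding primitive_root_of_unity_def by auto
  qed
  show ?thesis
    using no_smaller[of a b] no_smaller[of b a] assms(2-4) by (metis linorder_neqE_nat)
qed

lemma primitive_root_of_unity_geometric_sum:
  fixes z :: "'a::field"
  assumes z: "primitive_root_of_unity n z" and "a < n" "b < n"
  shows "(\<Sum>t<n. (z ^ a * inverse z ^ b) ^ t) = (if a = b then of_nat n else 0)"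
proof -
  have "z \<noteq> 0" using primitive_root_of_unity_nonzero[OF z] assms(2) by simp
  show ?thesis
  proof (cases "a = b")
    case True
    then show ?thesis using \<open>z \<noteq> 0\<close> by (simp add: power_inverse)
  next
    case False
    have "z ^ a * inverse z ^ b \<noteq> 1"
      using primitive_root_of_unity_power_inj[OF z assms(2,3)] False \<open>z \<noteq> 0\<close>
      by (auto simp: power_inverse field_simps)
    moreover have "(z ^ a * inverse z ^ b) ^ n = 1"
      using z unfolding primitive_root_of_unity_def
      by (simp add: power_mult_distrib power_inverse flip: power_mult)
         (simp add: mult.commute[of _ n] power_mult)
    ultimately show ?thesis using False by (simp add: sum_gp_strict)
  qed
qed

lemma primitive_root_of_unity_dft_inversion:
  fixes z g :: "'a::field"
  assumes z: "primitive_root_of_unity n z" and i: "i < n"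
  shows "(\<Sum>t<n. (\<Sum>a<n. f a * (g * z ^ t) ^ a) * (inverse z ^ i) ^ t) = of_nat n * g ^ i * f i"
proof -
  have term_swap: "f a * (g * z ^ t) ^ a * (inverse z ^ i) ^ t = f a * g ^ a * (z ^ a * inverse z ^ i) ^ t"
    for a t
    by (simp add: power_mult_distrib mult_ac flip: power_mult)
  have "(\<Sum>t<n. (\<Sum>a<n. f a * (g * z ^ t) ^ a) * (inverse z ^ i) ^ t)
      = (\<Sum>t<n. \<Sum>a<n. f a * g ^ a * (z ^ a * inverse z ^ i) ^ t)"
    by (simp add: sum_distrib_right term_swap)
  also have "\<dots> = (\<Sum>a<n. f a * g ^ a * (\<Sum>t<n. (z ^ a * inverse z ^ i) ^ t))"
    by (subst sum.swap) (simp add: sum_distrib_left)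
  also have "\<dots> = (\<Sum>a<n. if a = i then of_nat n * g ^ i * f i else 0)"
    by (intro sum.cong) (auto simp: primitive_root_of_unity_geometric_sum[OF z _ i])
  also have "\<dots> = of_nat n * g ^ i * f i"
    using i by simp
  finally show ?thesis .
qed

lemma array_eval_by_columns:
  "array_eval M N v x y = (\<Sum>j<N. (\<Sum>i<M. v i j * x ^ i) * y ^ j)"
  unfolding array_eval_def by (subst sum.swap) (simp add: sum_distrib_right)

lemma array_eval_dft_inversion:
  assumes \<zeta>1: "primitive_root_of_unity M \<zeta>1" and \<zeta>2: "primitive_root_of_unity N \<zeta>2"
    and i: "i < M" and j: "j < N"
  shows "array_eval M N (\<lambda>\<theta> \<phi>. array_eval M N u (\<gamma> * \<zeta>1 ^ \<theta>) (\<beta> * \<zeta>2 ^ \<phi>))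
           (inverse \<zeta>1 ^ i) (inverse \<zeta>2 ^ j)
         = of_nat M * of_nat N * \<gamma> ^ i * \<beta> ^ j * u i j"
proof -
  define row where "row \<phi> a = (\<Sum>b<N. u a b * (\<beta> * \<zeta>2 ^ \<phi>) ^ b)" for \<phi> a
  have eval_rows: "array_eval M N u x (\<beta> * \<zeta>2 ^ \<phi>) = (\<Sum>a<M. row \<phi> a * x ^ a)" for x \<phi>
    unfolding array_eval_def row_def by (simp add: sum_distrib_left mult_ac)
  have "array_eval M N (\<lambda>\<theta> \<phi>. array_eval M N u (\<gamma> * \<zeta>1 ^ \<theta>) (\<beta> * \<zeta>2 ^ \<phi>))
           (inverse \<zeta>1 ^ i) (inverse \<zeta>2 ^ j)
      = (\<Sum>\<phi><N. (\<Sum>\<theta><M. (\<Sum>a<M. row \<phi> a * (\<gamma> * \<zeta>1 ^ \<theta>) ^ a) * (inverse \<zeta>1 ^ i) ^ \<theta>)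
               * (inverse \<zeta>2 ^ j) ^ \<phi>)"
    by (simp add: array_eval_by_columns[where x = "inverse \<zeta>1 ^ i"] eval_rows)
  also have "\<dots> = of_nat M * \<gamma> ^ i * (\<Sum>\<phi><N. (\<Sum>b<N. u i b * (\<beta> * \<zeta>2 ^ \<phi>) ^ b) * (inverse \<zeta>2 ^ j) ^ \<phi>)"
    by (simp only: primitive_root_of_unity_dft_inversion[OF \<zeta>1 i]) (simp add: row_def sum_distrib_left mult_ac)
  also have "\<dots> = of_nat M * of_nat N * \<gamma> ^ i * \<beta> ^ j * u i j"
    by (simp only: primitive_root_of_unity_dft_inversion[OF \<zeta>2 j]) (simp add: mult_ac)
  finally show ?thesis .
qed

section \<open>Evaluation of arrays\<close>

lemma array_eval_add:
  "array_eval M N (\<lambda>i j. u i j + v i j) x y = array_eval M N u x y + array_eval M N v x y"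
  unfolding array_eval_def by (simp add: sum.distrib algebra_simps)

lemma array_eval_scale:
  "array_eval M N (\<lambda>i j. z * u i j) x y = z * array_eval M N u x y"
  unfolding array_eval_def by (simp add: sum_distrib_left algebra_simps)

lemma array_eval_sum:
  "array_eval M N (\<lambda>i j. \<Sum>k\<in>F. f k i j) x y = (\<Sum>k\<in>F. array_eval M N (f k) x y)"
proof (induction F rule: infinite_finite_induct)
  case (insert k F)
  then show ?case using array_eval_add[of M N "f k" "\<lambda>i j. \<Sum>k\<in>F. f k i j"] by simp
qed (simp_all add: array_eval_def)

lemma array_eval_cong:
  assumes "\<And>i j. i < M \<Longrightarrow> j < N \<Longrightarrow> u i j = v i j"
  shows "array_eval M N u x y = array_eval M N v x y"
  unfolding array_eval_def using assms by simp

lemma array_eval_eq_sum_over: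
  assumes "P \<subseteq> {..<M} \<times> {..<N}" and "\<And>i j. i < M \<Longrightarrow> j < N \<Longrightarrow> (i, j) \<notin> P \<Longrightarrow> u i j = 0"
  shows "array_eval M N u x y = (\<Sum>q\<in>P. u (fst q) (snd q) * x ^ fst q * y ^ snd q)"
proof -
  have "array_eval M N u x y = (\<Sum>q\<in>{..<M} \<times> {..<N}. u (fst q) (snd q) * x ^ fst q * y ^ snd q)"
    unfolding array_eval_def by (simp add: sum.cartesian_product split_beta)
  also have "\<dots> = (\<Sum>q\<in>P. u (fst q) (snd q) * x ^ fst q * y ^ snd q)"
    using assms by (intro sum.mono_neutral_right) auto
  finally show ?thesis .
qed

lemma array_eval_point_masses:
  assumes "\<And>k. k \<in> I \<Longrightarrow> fst (p k) < M \<and> snd (p k) < N"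
  shows "array_eval M N (\<lambda>i j. \<Sum>k\<in>I. if (i, j) = p k then z k else 0) x y
       = (\<Sum>k\<in>I. z k * x ^ fst (p k) * y ^ snd (p k))"
proof -
  have "array_eval M N (\<lambda>i j. if (i, j) = p k then z k else 0) x y = z k * x ^ fst (p k) * y ^ snd (p k)"
    if "k \<in> I" for k
    using assms[OF that] by (subst array_eval_eq_sum_over[of "{p k}"]) (auto simp: mem_Times_iff)
  then show ?thesis by (simp add: array_eval_sum)
qed

lemma array_eval_col_shift:
  fixes u :: "nat \<Rightarrow> nat \<Rightarrow> 'a::field"
  assumes "0 < M" "x ^ M = l"
  shows "array_eval M N (col_shift M N l u) x y = x * array_eval M N u x y"
proof -
  obtain m where m: "M = Suc m" using assms(1) by (cases M) auto
  have wrap: "x * (x ^ m * z) = l * z" for z using assms(2) m by (simp add: mult.assoc[symmetric])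
  have "array_eval M N (col_shift M N l u) x y =
      (\<Sum>j<N. l * u m j * y ^ j) + (\<Sum>i<m. \<Sum>j<N. u i j * x ^ Suc i * y ^ j)"
    unfolding array_eval_def m sum.lessThan_Suc_shift by (simp add: col_shift_def)
  also have "\<dots> = x * ((\<Sum>i<m. \<Sum>j<N. u i j * x ^ i * y ^ j) + (\<Sum>j<N. u m j * x ^ m * y ^ j))"
    by (simp add: sum_distrib_left distrib_left sum.distrib mult_ac wrap)
  also have "\<dots> = x * array_eval M N u x y"
    unfolding array_eval_def m by simp
  finally show ?thesis .
qed

lemma array_eval_row_shift:
  fixes u :: "nat \<Rightarrow> nat \<Rightarrow> 'a::field"
  assumes "0 < N" "y ^ N = l"
  shows "array_eval M N (row_shift M N l u) x y = y * array_eval M N u x y"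
proof -
  obtain n where n: "N = Suc n" using assms(1) by (cases N) auto
  have wrap: "y * (w * (y ^ n * z)) = l * (w * z)" for z w using assms(2) n by (simp add: mult_ac)
  have "array_eval M N (row_shift M N l u) x y =
      (\<Sum>i<M. l * u i n * x ^ i) + (\<Sum>i<M. \<Sum>j<n. u i j * x ^ i * y ^ Suc j)"
    unfolding array_eval_def n sum.lessThan_Suc_shift by (simp add: row_shift_def sum.distrib mult_ac)
  also have "\<dots> = y * ((\<Sum>i<M. \<Sum>j<n. u i j * x ^ i * y ^ j) + (\<Sum>i<M. u i n * x ^ i * y ^ n))"
    by (simp add: sum_distrib_left distrib_left sum.distrib mult_ac wrap)
  also have "\<dots> = y * array_eval M N u x y"
    unfolding array_eval_def n by (simp add: sum.distrib)
  finally show ?thesis .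
qed

text \<open>Since the shifts act as multiplication by \<open>x\<close> and \<open>y\<close>, this is the product \<open>w(x,y) u(x,y)\<close>
  in \<open>'a[x,y]/\<langle>x\<^sup>M - l1, y\<^sup>N - l2\<rangle>\<close>.\<close>
definition constacyclic_mult ::
  "nat \<Rightarrow> nat \<Rightarrow> 'a::field \<Rightarrow> 'a \<Rightarrow> (nat \<Rightarrow> nat \<Rightarrow> 'a) \<Rightarrow> (nat \<Rightarrow> nat \<Rightarrow> 'a) \<Rightarrow> nat \<Rightarrow> nat \<Rightarrow> 'a"
where
  "constacyclic_mult M N l1 l2 w u =
     (\<lambda>i j. \<Sum>a<M. \<Sum>b<N. w a b * ((col_shift M N l1 ^^ a) ((row_shift M N l2 ^^ b) u)) i j)"

lemma array_eval_constacyclic_mult: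
  assumes "0 < M" "0 < N" "x ^ M = l1" "y ^ N = l2"
  shows "array_eval M N (constacyclic_mult M N l1 l2 w u) x y = array_eval M N w x y * array_eval M N u x y"
proof -
  have col: "array_eval M N ((col_shift M N l1 ^^ a) v) x y = x ^ a * array_eval M N v x y" for a v
    by (induction a) (simp_all add: array_eval_col_shift[OF assms(1,3)])
  have row: "array_eval M N ((row_shift M N l2 ^^ b) v) x y = y ^ b * array_eval M N v x y" for b v
    by (induction b) (simp_all add: array_eval_row_shift[OF assms(2,4)])
  show ?thesis
    unfolding constacyclic_mult_def
    by (simp add: array_eval_sum array_eval_scale col row array_eval_def[of M N w] sum_distrib_left mult_ac)
qed

section \<open>Extension of a code to a larger field\<close>

definition linear_over :: "('k::field \<Rightarrow> 'K::field) \<Rightarrow> ('K \<Rightarrow> 'k) \<Rightarrow> bool" where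
  "linear_over h \<tau> \<longleftrightarrow> (\<forall>x y. \<tau> (x + y) = \<tau> x + \<tau> y) \<and> (\<forall>a x. \<tau> (h a * x) = a * \<tau> x)"

definition map_array :: "nat \<Rightarrow> nat \<Rightarrow> ('a \<Rightarrow> 'b::zero) \<Rightarrow> (nat \<Rightarrow> nat \<Rightarrow> 'a) \<Rightarrow> nat \<Rightarrow> nat \<Rightarrow> 'b" where
  "map_array M N \<tau> u = (\<lambda>i j. if i < M \<and> j < N then \<tau> (u i j) else 0)"

text \<open>The extension of \<open>C\<close> to \<open>'K\<close> (the \<open>'K\<close>-span of the embedded codewords), described dually:
  an array belongs to it iff every \<open>h\<close>-linear functional maps it entrywise into \<open>C\<close>.\<close>
definition code_extension ::
  "('k::field \<Rightarrow> 'K::field) \<Rightarrow> nat \<Rightarrow> nat \<Rightarrow> (nat \<Rightarrow> nat \<Rightarrow> 'k) set \<Rightarrow> (nat \<Rightarrow> nat \<Rightarrow> 'K) set"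
where
  "code_extension h M N C = {u. \<forall>\<tau>. linear_over h \<tau> \<longrightarrow> map_array M N \<tau> u \<in> C}"

lemma linear_over_zero: "linear_over h \<tau> \<Longrightarrow> \<tau> 0 = 0"
  unfolding linear_over_def by (metis add_cancel_right_right add_0)

lemma linear_over_mult_left: "linear_over h \<tau> \<Longrightarrow> linear_over h (\<lambda>x. \<tau> (z * x))"
  unfolding linear_over_def by (metis distrib_left mult.left_commute)

context field_hom
begin

lemma linear_over_exists: "\<exists>\<tau>. linear_over hom \<tau> \<and> \<tau> 1 = 1"
proof -
  interpret ext: vector_space "\<lambda>a x. hom a * x"
    by unfold_locales (auto simp: hom_add hom_mult algebra_simps)
  interpret base: vector_space "(*) :: 'a \<Rightarrow> 'a \<Rightarrow> 'a"
    by unfold_locales (auto simp: algebra_simps)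
  interpret pair: vector_space_pair "\<lambda>a x. hom a * x" "(*) :: 'a \<Rightarrow> 'a \<Rightarrow> 'a" ..
  have one: "ext.independent {1}" by simp
  define \<tau> where "\<tau> = pair.construct {1} (\<lambda>_. 1)"
  interpret \<tau>: Vector_Spaces.linear "\<lambda>a x. hom a * x" "(*) :: 'a \<Rightarrow> 'a \<Rightarrow> 'a" \<tau>
    unfolding \<tau>_def by (rule pair.linear_construct[OF one])
  have "linear_over hom \<tau>"
    unfolding linear_over_def using \<tau>.add \<tau>.scale by blast
  moreover have "\<tau> 1 = 1"
    unfolding \<tau>_def by (rule pair.construct_basis[OF one]) simp
  ultimately show ?thesis by blast
qed

lemma code_extension_small_support_eq_0:
  assumes u: "u \<in> code_extension hom M N C" and E: "finite E" "card E < min_distance M N C"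
    and support: "\<And>i j. i < M \<Longrightarrow> j < N \<Longrightarrow> u i j \<noteq> 0 \<Longrightarrow> (i, j) \<in> E"
    and "i < M" "j < N"
  shows "u i j = 0"
proof (rule ccontr)
  assume nonzero: "u i j \<noteq> 0"
  obtain \<tau> where \<tau>: "linear_over hom \<tau>" "\<tau> 1 = 1"
    using linear_over_exists by blast
  define w where "w = map_array M N (\<lambda>x. \<tau> (inverse (u i j) * x)) u"
  have "w \<in> C"
    using u linear_over_mult_left[OF \<tau>(1)] unfolding code_extension_def w_def by blast
  moreover have "w i j = 1"
    using nonzero \<tau>(2) \<open>i < M\<close> \<open>j < N\<close> unfolding w_def map_array_def by simp
  then have "w \<noteq> (\<lambda>i j. 0)" by (metis zero_neq_one)
  ultimately have "min_distance M N C \<le> hamming_weight M N w"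
    unfolding min_distance_def by - (rule Least_le, blast)
  also have "\<dots> \<le> card E"
  proof -
    have "w a b = 0" if "u a b = 0" for a b
      using that linear_over_zero[OF \<tau>(1)] unfolding w_def map_array_def by simp
    then have "{(a, b). a < M \<and> b < N \<and> w a b \<noteq> 0} \<subseteq> E"
      using support by blast
    then show ?thesis
      unfolding hamming_weight_def using E(1) by (rule card_mono[rotated])
  qed
  finally show False using E(2) by simp
qed

end

lemma of_nat_nonzero_if_coprime_CHAR:
  assumes "coprime n CHAR('a::field)"
  shows "of_nat n \<noteq> (0::'a)"
proof
  assume "of_nat n = (0::'a)"
  then have "CHAR('a) dvd n" by (simp add: of_nat_eq_0_iff_char_dvd)
  with assms have "is_unit CHAR('a)" by (simp add: coprime_absorb_right)
  then show False by simp
qed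

lemma field_embedding_imp_field_hom: "field_embedding h \<Longrightarrow> field_hom h"
  unfolding field_embedding_def by unfold_locales auto

section \<open>The spectral system\<close>

lemma mult_mat_vec_unique_solution:
  fixes A :: "'a::field mat"
  assumes A: "A \<in> carrier_mat m n" and Y: "Y \<in> carrier_vec n" "A *\<^sub>v Y = B"
    and kernel: "\<And>X. X \<in> carrier_vec n \<Longrightarrow> A *\<^sub>v X = 0\<^sub>v m \<Longrightarrow> X = 0\<^sub>v n"
  shows "\<exists>!X. X \<in> carrier_vec n \<and> A *\<^sub>v X = B"
proof (rule ex1I[of _ Y])
  fix X assume "X \<in> carrier_vec n \<and> A *\<^sub>v X = B"
  then have X: "X \<in> carrier_vec n" "A *\<^sub>v X = B" by auto
  have "A *\<^sub>v (X - Y) = A *\<^sub>v Y - A *\<^sub>v Y"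
    using mult_minus_distrib_mat_vec[OF A X(1) Y(1)] X(2) Y(2) by simp
  also have "\<dots> = 0\<^sub>v m"
    using A Y(1) by simp
  finally have "X - Y = 0\<^sub>v n"
    using X(1) Y(1) by (intro kernel) auto
  show "X = Y"
  proof (rule eq_vecI)
    show "dim_vec X = dim_vec Y" using X(1) Y(1) by simp
    fix i assume "i < dim_vec Y"
    then have "(X - Y) $ i = 0" using \<open>X - Y = 0\<^sub>v n\<close> Y(1) by simp
    then show "X $ i = Y $ i" using \<open>i < dim_vec Y\<close> X(1) Y(1) by simp
  qed
qed (use Y in simp)

locale constacyclic_spectrum = field_hom h for h :: "'k::field \<Rightarrow> 'K::field" +
  fixes M N :: nat and l1 l2 :: 'k and \<gamma> \<beta> \<zeta>1 \<zeta>2 :: 'K and C :: "(nat \<Rightarrow> nat \<Rightarrow> 'k) set"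
  assumes M_pos: "0 < M" and N_pos: "0 < N"
    and M_coprime: "coprime M CHAR('k)" and N_coprime: "coprime N CHAR('k)"
    and l1_nonzero: "l1 \<noteq> 0" and l2_nonzero: "l2 \<noteq> 0"
    and gamma_power: "\<gamma> ^ M = h l1" and beta_power: "\<beta> ^ N = h l2"
    and zeta1: "primitive_root_of_unity M \<zeta>1" and zeta2: "primitive_root_of_unity N \<zeta>2"
    and code: "constacyclic_code_2D M N l1 l2 C"
begin

definition dft :: "(nat \<Rightarrow> nat \<Rightarrow> 'K) \<Rightarrow> nat \<Rightarrow> nat \<Rightarrow> 'K" where
  "dft u \<theta> \<phi> = array_eval M N u (\<gamma> * \<zeta>1 ^ \<theta>) (\<beta> * \<zeta>2 ^ \<phi>)"

lemma spectrum2_eq_dft: "spectrum2 h M N \<gamma> \<beta> \<zeta>1 \<zeta>2 c = dft (\<lambda>i j. h (c i j))"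
  unfolding spectrum2_def dft_def ..

lemma MN_nonzero: "of_nat M * of_nat N \<noteq> (0::'K)"
proof -
  have "h (of_nat M) \<noteq> 0" "h (of_nat N) \<noteq> 0"
    using of_nat_nonzero_if_coprime_CHAR[OF M_coprime] of_nat_nonzero_if_coprime_CHAR[OF N_coprime]
    by simp_all
  then show ?thesis by (simp add: hom_of_nat)
qed

lemma gamma_nonzero: "\<gamma> \<noteq> 0"
proof
  assume "\<gamma> = 0"
  then have "h l1 = 0" using gamma_power M_pos by (simp add: power_0_left)
  then show False using l1_nonzero by simp
qed

lemma beta_nonzero: "\<beta> \<noteq> 0"
proof
  assume "\<beta> = 0"
  then have "h l2 = 0" using beta_power N_pos by (simp add: power_0_left)
  then show False using l2_nonzero by simp
qed

lemma grid_point_in_V_circ: "(\<gamma> * \<zeta>1 ^ \<theta>, \<beta> * \<zeta>2 ^ \<phi>) \<in> V_circ h M N l1 l2"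
proof -
  have "(\<zeta>1 ^ \<theta>) ^ M = 1" "(\<zeta>2 ^ \<phi>) ^ N = 1"
    using zeta1 zeta2 unfolding primitive_root_of_unity_def
    by (simp_all add: mult.commute flip: power_mult) (simp_all add: power_mult)
  then show ?thesis
    unfolding V_circ_def by (simp add: power_mult_distrib gamma_power beta_power)
qed

lemma dft_inversion:
  assumes "i < M" "j < N"
  shows "array_eval M N (dft u) (inverse \<zeta>1 ^ i) (inverse \<zeta>2 ^ j)
       = of_nat M * of_nat N * \<gamma> ^ i * \<beta> ^ j * u i j"
  unfolding dft_def[abs_def] using array_eval_dft_inversion[OF zeta1 zeta2 assms] by simp

lemma dft_scale: "dft (\<lambda>i j. z * u i j) \<theta> \<phi> = z * dft u \<theta> \<phi>"
  unfolding dft_def by (rule array_eval_scale)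

lemma dft_sum: "dft (\<lambda>i j. \<Sum>k\<in>F. f k i j) \<theta> \<phi> = (\<Sum>k\<in>F. dft (f k) \<theta> \<phi>)"
  unfolding dft_def by (rule array_eval_sum)

lemma dft_constacyclic_mult:
  "dft (constacyclic_mult M N (h l1) (h l2) w u) \<theta> \<phi> = dft w \<theta> \<phi> * dft u \<theta> \<phi>"
  using grid_point_in_V_circ[of \<theta> \<phi>] unfolding dft_def V_circ_def
  by (simp add: array_eval_constacyclic_mult[OF M_pos N_pos])

definition dft_delta :: "nat \<Rightarrow> nat \<Rightarrow> nat \<Rightarrow> nat \<Rightarrow> 'K" where
  "dft_delta \<theta>0 \<phi>0 a b =
     inverse (of_nat M * of_nat N) * inverse (\<gamma> * \<zeta>1 ^ \<theta>0) ^ a * inverse (\<beta> * \<zeta>2 ^ \<phi>0) ^ b"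

lemma dft_dft_delta:
  assumes "\<theta> < M" "\<phi> < N" "\<theta>0 < M" "\<phi>0 < N"
  shows "dft (dft_delta \<theta>0 \<phi>0) \<theta> \<phi> = (if (\<theta>, \<phi>) = (\<theta>0, \<phi>0) then 1 else 0)"
proof -
  have "\<zeta>1 \<noteq> 0" "\<zeta>2 \<noteq> 0"
    using primitive_root_of_unity_nonzero zeta1 zeta2 M_pos N_pos by auto
  then have ratios: "\<gamma> * \<zeta>1 ^ \<theta> * inverse (\<gamma> * \<zeta>1 ^ \<theta>0) = \<zeta>1 ^ \<theta> * inverse \<zeta>1 ^ \<theta>0"
      "\<beta> * \<zeta>2 ^ \<phi> * inverse (\<beta> * \<zeta>2 ^ \<phi>0) = \<zeta>2 ^ \<phi> * inverse \<zeta>2 ^ \<phi>0"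
    using gamma_nonzero beta_nonzero by (simp_all add: field_simps power_inverse)
  have entry: "dft_delta \<theta>0 \<phi>0 a b * (\<gamma> * \<zeta>1 ^ \<theta>) ^ a * (\<beta> * \<zeta>2 ^ \<phi>) ^ b
      = inverse (of_nat M * of_nat N) * ((\<zeta>1 ^ \<theta> * inverse \<zeta>1 ^ \<theta>0) ^ a * (\<zeta>2 ^ \<phi> * inverse \<zeta>2 ^ \<phi>0) ^ b)"
    for a b
    unfolding dft_delta_def ratios[symmetric] by (simp only: power_mult_distrib mult_ac)
  have "dft (dft_delta \<theta>0 \<phi>0) \<theta> \<phi> = inverse (of_nat M * of_nat N) *
      ((\<Sum>a<M. (\<zeta>1 ^ \<theta> * inverse \<zeta>1 ^ \<theta>0) ^ a) * (\<Sum>b<N. (\<zeta>2 ^ \<phi> * inverse \<zeta>2 ^ \<phi>0) ^ b))"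
    unfolding dft_def array_eval_def entry sum_product by (simp add: sum_distrib_left)
  then show ?thesis
    using assms MN_nonzero
    by (simp add: primitive_root_of_unity_geometric_sum[OF zeta1]
        primitive_root_of_unity_geometric_sum[OF zeta2] del: inverse_mult_distrib)
qed

lemma code_extension_zero: "(\<lambda>i j. 0) \<in> code_extension h M N C"
proof -
  have "map_array M N \<tau> (\<lambda>i j. 0) = (\<lambda>i j. 0)" if "linear_over h \<tau>" for \<tau>
    using linear_over_zero[OF that] unfolding map_array_def by (simp cong: if_cong)
  then show ?thesis
    using code unfolding code_extension_def constacyclic_code_2D_def by auto
qed

lemma code_extension_add:
  assumes "u \<in> code_extension h M N C" "v \<in> code_extension h M N C"
  shows "(\<lambda>i j. u i j + v i j) \<in> code_extension h M N C"
proof -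
  have "map_array M N \<tau> (\<lambda>i j. u i j + v i j) = (\<lambda>i j. map_array M N \<tau> u i j + map_array M N \<tau> v i j)"
    if "linear_over h \<tau>" for \<tau>
    using that unfolding map_array_def linear_over_def by (auto simp: fun_eq_iff)
  then show ?thesis
    using assms code unfolding code_extension_def constacyclic_code_2D_def by auto
qed

lemma code_extension_scale:
  assumes "u \<in> code_extension h M N C"
  shows "(\<lambda>i j. z * u i j) \<in> code_extension h M N C"
  unfolding code_extension_def
proof (intro CollectI allI impI)
  fix \<tau> assume "linear_over h \<tau>"
  then have "map_array M N (\<lambda>x. \<tau> (z * x)) u \<in> C"
    using assms linear_over_mult_left unfolding code_extension_def by blast
  then show "map_array M N \<tau> (\<lambda>i j. z * u i j) \<in> C"
    by (simp add: map_array_def)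
qed

lemma code_extension_sum:
  assumes "\<And>k. k \<in> F \<Longrightarrow> f k \<in> code_extension h M N C"
  shows "(\<lambda>i j. \<Sum>k\<in>F. f k i j) \<in> code_extension h M N C"
  using assms
proof (induction F rule: infinite_finite_induct)
  case (insert k F)
  then show ?case using code_extension_add[of "f k" "\<lambda>i j. \<Sum>k\<in>F. f k i j"] by simp
qed (simp_all add: code_extension_zero)

lemma code_extension_col_shift:
  assumes "u \<in> code_extension h M N C"
  shows "col_shift M N (h l1) u \<in> code_extension h M N C"
proof -
  have "map_array M N \<tau> (col_shift M N (h l1) u) = col_shift M N l1 (map_array M N \<tau> u)"
    if "linear_over h \<tau>" for \<tau>
    using that unfolding map_array_def linear_over_def col_shift_def by (auto simp: fun_eq_iff)
  then show ?thesis
    using assms code unfolding code_extension_def constacyclic_code_2D_def by auto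
qed

lemma code_extension_row_shift:
  assumes "u \<in> code_extension h M N C"
  shows "row_shift M N (h l2) u \<in> code_extension h M N C"
proof -
  have "map_array M N \<tau> (row_shift M N (h l2) u) = row_shift M N l2 (map_array M N \<tau> u)"
    if "linear_over h \<tau>" for \<tau>
    using that unfolding map_array_def linear_over_def row_shift_def by (auto simp: fun_eq_iff)
  then show ?thesis
    using assms code unfolding code_extension_def constacyclic_code_2D_def by auto
qed

lemma code_extension_constacyclic_mult:
  assumes "u \<in> code_extension h M N C"
  shows "constacyclic_mult M N (h l1) (h l2) w u \<in> code_extension h M N C"
proof -
  have "(row_shift M N (h l2) ^^ b) u \<in> code_extension h M N C" for b
    by (induction b) (simp_all add: assms code_extension_row_shift)
  then have "(col_shift M N (h l1) ^^ a) ((row_shift M N (h l2) ^^ b) u) \<in> code_extension h M N C" for a b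
    by (induction a) (simp_all add: code_extension_col_shift)
  then show ?thesis
    unfolding constacyclic_mult_def by (intro code_extension_sum code_extension_scale)
qed

lemma code_extension_embed:
  assumes "c \<in> C"
  shows "(\<lambda>i j. h (c i j)) \<in> code_extension h M N C"
proof -
  have "c \<in> arrays M N"
    using assms code unfolding constacyclic_code_2D_def by auto
  then have "map_array M N \<tau> (\<lambda>i j. h (c i j)) = (\<lambda>i j. \<tau> 1 * c i j)" if "linear_over h \<tau>" for \<tau>
    using that unfolding map_array_def linear_over_def arrays_def
    by (auto simp: fun_eq_iff) (metis mult.commute mult_1_right)
  then show ?thesis
    using assms code unfolding code_extension_def constacyclic_code_2D_def by auto
qed

lemma dft_interpolation_at_point:
  assumes "fst q < M" "snd q < N" "(\<gamma> * \<zeta>1 ^ fst q, \<beta> * \<zeta>2 ^ snd q) \<notin> common_zero_set h M N l1 l2 C"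
  shows "\<exists>u. u \<in> code_extension h M N C \<and>
           (\<forall>\<theta><M. \<forall>\<phi><N. dft u \<theta> \<phi> = (if (\<theta>, \<phi>) = q then z else 0))"
proof -
  obtain \<theta>0 \<phi>0 where q: "q = (\<theta>0, \<phi>0)" by fastforce
  obtain c where c: "c \<in> C" "dft (\<lambda>i j. h (c i j)) \<theta>0 \<phi>0 \<noteq> 0"
    using assms(3) grid_point_in_V_circ unfolding q common_zero_set_def V_one_def dft_def by auto
  define s where "s = z / dft (\<lambda>i j. h (c i j)) \<theta>0 \<phi>0"
  define u where "u = constacyclic_mult M N (h l1) (h l2)
                        (\<lambda>a b. s * dft_delta \<theta>0 \<phi>0 a b) (\<lambda>i j. h (c i j))"
  have "u \<in> code_extension h M N C"
    unfolding u_def by (intro code_extension_constacyclic_mult code_extension_embed c(1))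
  moreover have "dft u \<theta> \<phi> = (if (\<theta>, \<phi>) = q then z else 0)" if "\<theta> < M" "\<phi> < N" for \<theta> \<phi>
    using c(2) that assms(1,2) unfolding q
    by (simp add: u_def dft_constacyclic_mult dft_scale dft_dft_delta) (simp add: s_def)
  ultimately show ?thesis by blast
qed

lemma dft_interpolation:
  assumes "\<And>k. k \<in> I \<Longrightarrow> fst (p k) < M \<and> snd (p k) < N \<and>
             (\<gamma> * \<zeta>1 ^ fst (p k), \<beta> * \<zeta>2 ^ snd (p k)) \<notin> common_zero_set h M N l1 l2 C"
  shows "\<exists>u\<in>code_extension h M N C. \<forall>\<theta><M. \<forall>\<phi><N.
           dft u \<theta> \<phi> = (\<Sum>k\<in>I. if (\<theta>, \<phi>) = p k then Z k else 0)"
proof -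
  have "\<forall>k\<in>I. \<exists>v. v \<in> code_extension h M N C \<and>
          (\<forall>\<theta><M. \<forall>\<phi><N. dft v \<theta> \<phi> = (if (\<theta>, \<phi>) = p k then Z k else 0))"
    using assms dft_interpolation_at_point by blast
  from bchoice[OF this] obtain v where v: "\<forall>k\<in>I. v k \<in> code_extension h M N C \<and>
      (\<forall>\<theta><M. \<forall>\<phi><N. dft (v k) \<theta> \<phi> = (if (\<theta>, \<phi>) = p k then Z k else 0))"
    by blast
  define u where "u = (\<lambda>i j. \<Sum>k\<in>I. v k i j)"
  have "u \<in> code_extension h M N C"
    unfolding u_def using v by (intro code_extension_sum) blast
  moreover have "dft u \<theta> \<phi> = (\<Sum>k\<in>I. if (\<theta>, \<phi>) = p k then Z k else 0)" if "\<theta> < M" "\<phi> < N" for \<theta> \<phi>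
    unfolding u_def dft_sum using v that by (intro sum.cong) auto
  ultimately show ?thesis by blast
qed

lemma spectral_sum_eq_received_eval:
  assumes c: "c \<in> C" and ij: "i < M" "j < N" "e i j = 0"
    and p: "\<And>k. k \<in> I \<Longrightarrow> fst (p k) < M \<and> snd (p k) < N" "inj_on p I"
    and nulls: "\<And>\<theta> \<phi>. \<theta> < M \<Longrightarrow> \<phi> < N \<Longrightarrow> (\<theta>, \<phi>) \<notin> p ` I \<Longrightarrow>
                  (\<gamma> * \<zeta>1 ^ \<theta>, \<beta> * \<zeta>2 ^ \<phi>) \<in> common_zero_set h M N l1 l2 C"
  shows "(\<Sum>k\<in>I. dft (\<lambda>i j. h (c i j)) (fst (p k)) (snd (p k))
                 * (inverse \<zeta>1 ^ i) ^ fst (p k) * (inverse \<zeta>2 ^ j) ^ snd (p k))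
       = array_eval M N (dft (\<lambda>i j. h (c i j + e i j))) (inverse \<zeta>1 ^ i) (inverse \<zeta>2 ^ j)"
proof -
  have "(\<Sum>k\<in>I. dft (\<lambda>i j. h (c i j)) (fst (p k)) (snd (p k))
                 * (inverse \<zeta>1 ^ i) ^ fst (p k) * (inverse \<zeta>2 ^ j) ^ snd (p k))
      = (\<Sum>q\<in>p ` I. dft (\<lambda>i j. h (c i j)) (fst q) (snd q) * (inverse \<zeta>1 ^ i) ^ fst q * (inverse \<zeta>2 ^ j) ^ snd q)"
    by (simp add: sum.reindex[OF p(2)])
  also have "\<dots> = array_eval M N (dft (\<lambda>i j. h (c i j))) (inverse \<zeta>1 ^ i) (inverse \<zeta>2 ^ j)"
  proof (rule array_eval_eq_sum_over[symmetric])
    show "p ` I \<subseteq> {..<M} \<times> {..<N}"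
      using p(1) by (simp add: image_subset_iff mem_Times_iff)
  qed (use nulls c in \<open>auto simp: common_zero_set_def V_one_def dft_def\<close>)
  also have "\<dots> = of_nat M * of_nat N * \<gamma> ^ i * \<beta> ^ j * h (c i j + e i j)"
    using dft_inversion[OF ij(1,2)] ij(3) by simp
  also have "\<dots> = array_eval M N (dft (\<lambda>i j. h (c i j + e i j))) (inverse \<zeta>1 ^ i) (inverse \<zeta>2 ^ j)"
    using dft_inversion[OF ij(1,2)] by simp
  finally show ?thesis .
qed

lemma spectral_kernel_trivial:
  assumes p: "\<And>k. k \<in> I \<Longrightarrow> fst (p k) < M \<and> snd (p k) < N \<and>
                (\<gamma> * \<zeta>1 ^ fst (p k), \<beta> * \<zeta>2 ^ snd (p k)) \<notin> common_zero_set h M N l1 l2 C"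
      "inj_on p I"
    and E: "finite E" "card E < min_distance M N C"
    and Z: "\<And>i j. i < M \<Longrightarrow> j < N \<Longrightarrow> (i, j) \<notin> E \<Longrightarrow>
              (\<Sum>k\<in>I. Z k * (inverse \<zeta>1 ^ i) ^ fst (p k) * (inverse \<zeta>2 ^ j) ^ snd (p k)) = 0"
    and k: "k \<in> I"
  shows "Z k = 0"
proof -
  obtain u where u: "u \<in> code_extension h M N C"
    and dft_u: "\<And>\<theta> \<phi>. \<theta> < M \<Longrightarrow> \<phi> < N \<Longrightarrow> dft u \<theta> \<phi> = (\<Sum>k\<in>I. if (\<theta>, \<phi>) = p k then Z k else 0)"
    using dft_interpolation[of I p Z] p(1) by blast
  have "u i j = 0" if ij: "i < M" "j < N" "(i, j) \<notin> E" for i j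
  proof -
    have "of_nat M * of_nat N * \<gamma> ^ i * \<beta> ^ j * u i j
        = array_eval M N (dft u) (inverse \<zeta>1 ^ i) (inverse \<zeta>2 ^ j)"
      using dft_inversion[OF ij(1,2)] by simp
    also have "\<dots> = (\<Sum>k\<in>I. Z k * (inverse \<zeta>1 ^ i) ^ fst (p k) * (inverse \<zeta>2 ^ j) ^ snd (p k))"
      using p(1) dft_u by (simp add: array_eval_cong[of M N "dft u"] array_eval_point_masses)
    also have "\<dots> = 0"
      using Z ij by blast
    finally show ?thesis
      using MN_nonzero gamma_nonzero beta_nonzero by simp
  qed
  then have "u i j = 0" if "i < M" "j < N" for i j
    using code_extension_small_support_eq_0[OF u E] that by blast
  then have "dft u (fst (p k)) (snd (p k)) = 0"
    unfolding dft_def array_eval_def by simp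
  moreover have "finite I"
    by (rule inj_on_finite[OF p(2), of "{..<M} \<times> {..<N}"])
       (use p(1) in \<open>simp_all add: image_subset_iff mem_Times_iff\<close>)
  ultimately show ?thesis
    using dft_u[of "fst (p k)" "snd (p k)"] p k by (simp add: inj_on_eq_iff sum.delta cong: if_cong)
qed

definition system_matrix :: "(nat \<times> nat) list \<Rightarrow> (nat \<times> nat) list \<Rightarrow> 'K mat" where
  "system_matrix ps qs = mat (length qs) (length ps) (\<lambda>(l, k).
     inverse (\<zeta>1 ^ (fst (qs ! l) * fst (ps ! k))) * inverse (\<zeta>2 ^ (snd (qs ! l) * snd (ps ! k))))"

lemma system_matrix_mult_vec:
  assumes "l < length qs" "X \<in> carrier_vec (length ps)"
  shows "(system_matrix ps qs *\<^sub>v X) $ l = (\<Sum>k<length ps.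
           X $ k * (inverse \<zeta>1 ^ fst (qs ! l)) ^ fst (ps ! k) * (inverse \<zeta>2 ^ snd (qs ! l)) ^ snd (ps ! k))"
  using assms
  by (simp add: system_matrix_def scalar_prod_def atLeast0LessThan mult_ac power_inverse flip: power_mult)

lemma system_matrix_mult_spectrum:
  assumes c: "c \<in> C" and ps: "distinct ps" "set ps \<subseteq> {..<M} \<times> {..<N}"
    and nulls: "\<And>\<theta> \<phi>. \<theta> < M \<Longrightarrow> \<phi> < N \<Longrightarrow> (\<theta>, \<phi>) \<notin> set ps \<Longrightarrow>
                  (\<gamma> * \<zeta>1 ^ \<theta>, \<beta> * \<zeta>2 ^ \<phi>) \<in> common_zero_set h M N l1 l2 C"
    and qs: "\<And>i j. (i, j) \<in> set qs \<Longrightarrow> i < M \<and> j < N \<and> e i j = 0"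
  shows "system_matrix ps qs *\<^sub>v vec (length ps) (\<lambda>k. dft (\<lambda>i j. h (c i j)) (fst (ps ! k)) (snd (ps ! k)))
       = vec (length qs) (\<lambda>l. array_eval M N (dft (\<lambda>i j. h (c i j + e i j)))
                                (inverse \<zeta>1 ^ fst (qs ! l)) (inverse \<zeta>2 ^ snd (qs ! l)))"
    (is "?A *\<^sub>v ?C = ?B")
proof (rule eq_vecI)
  fix l assume "l < dim_vec ?B"
  then have l: "l < length qs" by simp
  obtain i j where ij: "qs ! l = (i, j)" by fastforce
  then have "i < M" "j < N" "e i j = 0"
    using qs nth_mem[OF l] by auto
  have "(?A *\<^sub>v ?C) $ l = (\<Sum>k<length ps. dft (\<lambda>i j. h (c i j)) (fst (ps ! k)) (snd (ps ! k))
                 * (inverse \<zeta>1 ^ i) ^ fst (ps ! k) * (inverse \<zeta>2 ^ j) ^ snd (ps ! k))"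
    by (simp add: system_matrix_mult_vec[OF l] ij)
  also have "\<dots> = array_eval M N (dft (\<lambda>i j. h (c i j + e i j))) (inverse \<zeta>1 ^ i) (inverse \<zeta>2 ^ j)"
  proof (rule spectral_sum_eq_received_eval[where e = e, OF c \<open>i < M\<close> \<open>j < N\<close> \<open>e i j = 0\<close>])
    show "fst (ps ! k) < M \<and> snd (ps ! k) < N" if "k \<in> {..<length ps}" for k
      using that ps(2) nth_mem[of k ps] by (metis lessThan_iff mem_Times_iff subsetD)
    have "(!) ps ` {..<length ps} = set ps"
      using nth_image[of "length ps" ps] by (simp add: atLeast0LessThan)
    then show "(\<gamma> * \<zeta>1 ^ \<theta>, \<beta> * \<zeta>2 ^ \<phi>) \<in> common_zero_set h M N l1 l2 C"
      if "\<theta> < M" "\<phi> < N" "(\<theta>, \<phi>) \<notin> (!) ps ` {..<length ps}" for \<theta> \<phi>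
      using nulls that by simp
  qed (simp add: inj_on_nth ps(1))
  also have "\<dots> = ?B $ l"
    using l ij by simp
  finally show "(?A *\<^sub>v ?C) $ l = ?B $ l" .
qed (simp add: system_matrix_def)

lemma system_matrix_kernel_trivial:
  assumes ps: "distinct ps" "set ps \<subseteq> {..<M} \<times> {..<N}"
    and nonnull: "\<And>\<theta> \<phi>. (\<theta>, \<phi>) \<in> set ps \<Longrightarrow> (\<gamma> * \<zeta>1 ^ \<theta>, \<beta> * \<zeta>2 ^ \<phi>) \<notin> common_zero_set h M N l1 l2 C"
    and E: "finite E" "card E < min_distance M N C"
    and qs: "\<And>i j. i < M \<Longrightarrow> j < N \<Longrightarrow> (i, j) \<notin> E \<Longrightarrow> (i, j) \<in> set qs"
    and X: "X \<in> carrier_vec (length ps)" "system_matrix ps qs *\<^sub>v X = 0\<^sub>v (length qs)"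
  shows "X = 0\<^sub>v (length ps)"
proof (rule eq_vecI)
  have equations: "(\<Sum>k<length ps.
      X $ k * (inverse \<zeta>1 ^ i) ^ fst (ps ! k) * (inverse \<zeta>2 ^ j) ^ snd (ps ! k)) = 0"
    if ij: "i < M" "j < N" "(i, j) \<notin> E" for i j
  proof -
    obtain l where "l < length qs" "qs ! l = (i, j)"
      using qs[OF ij] by (auto simp: in_set_conv_nth)
    then show ?thesis
      using system_matrix_mult_vec[OF _ X(1)] X(2) by force
  qed
  have points: "fst (ps ! k) < M \<and> snd (ps ! k) < N \<and>
      (\<gamma> * \<zeta>1 ^ fst (ps ! k), \<beta> * \<zeta>2 ^ snd (ps ! k)) \<notin> common_zero_set h M N l1 l2 C"
    if "k \<in> {..<length ps}" for k
    using that ps(2) nth_mem[of k ps] nonnull[of "fst (ps ! k)" "snd (ps ! k)"]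
    by (metis lessThan_iff mem_Times_iff prod.collapse subsetD)
  fix k assume "k < dim_vec (0\<^sub>v (length ps) :: 'K vec)"
  then show "X $ k = 0\<^sub>v (length ps) $ k"
    using spectral_kernel_trivial[OF points _ E equations, of k] ps(1) by (simp add: inj_on_nth)
qed (use X in simp)

end

theorem mainTheorem10:
  fixes h :: "'k::{field,finite} \<Rightarrow> 'K::{field,finite}"
    and M N :: nat and l1 l2 :: 'k and \<gamma> \<beta> \<zeta>1 \<zeta>2 :: 'K
    and C :: "(nat \<Rightarrow> nat \<Rightarrow> 'k) set" and d :: nat
    and c e :: "nat \<Rightarrow> nat \<Rightarrow> 'k"
    and spec_nonnull :: "(nat \<times> nat) list" and err_free :: "(nat \<times> nat) list"
  assumes hemb: "field_embedding h"
    and MN: "0 < M" "0 < N"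
    and cop: "coprime M CHAR('k)" "coprime N CHAR('k)"
    and lam: "l1 \<noteq> 0" "l2 \<noteq> 0"
    and gam: "\<gamma> ^ M = h l1" and bet: "\<beta> ^ N = h l2"
    and z1: "primitive_root_of_unity M \<zeta>1" and z2: "primitive_root_of_unity N \<zeta>2"
    and code: "constacyclic_code_2D M N l1 l2 C"
    and dist: "d = min_distance M N C"
    and cC: "c \<in> C"
    and earr: "e \<in> arrays M N"
    and tpos: "1 \<le> card {(i, j). i < M \<and> j < N \<and> e i j \<noteq> 0}"
    and tbound: "card {(i, j). i < M \<and> j < N \<and> e i j \<noteq> 0} \<le> (d - 1) div 2"
    and enum_spec: "distinct spec_nonnull"
      "set spec_nonnull = Omega M N -
         {(\<theta>, \<phi>). \<theta> < M \<and> \<phi> < N \<and>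
            (\<gamma> * \<zeta>1 ^ \<theta>, \<beta> * \<zeta>2 ^ \<phi>) \<in> common_zero_set h M N l1 l2 C}"
    and enum_err: "distinct err_free"
      "set err_free = Omega M N - {(i, j). i < M \<and> j < N \<and> e i j \<noteq> 0}"
  shows
    "let r = (\<lambda>i j. c i j + e i j);
         Rs = spectrum2 h M N \<gamma> \<beta> \<zeta>1 \<zeta>2 r;
         Rpoly = (\<lambda>x y. array_eval M N Rs x y);
         s' = length spec_nonnull; t' = length err_free;
         A = mat t' s' (\<lambda>(l, k).
               inverse (\<zeta>1 ^ (fst (err_free ! l) * fst (spec_nonnull ! k))) *
               inverse (\<zeta>2 ^ (snd (err_free ! l) * snd (spec_nonnull ! k))));
         B = vec t' (\<lambda>l. Rpoly (inverse \<zeta>1 ^ fst (err_free ! l))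
                               (inverse \<zeta>2 ^ snd (err_free ! l)));
         Cs = spectrum2 h M N \<gamma> \<beta> \<zeta>1 \<zeta>2 c
     in (\<exists>!X. X \<in> carrier_vec s' \<and> A *\<^sub>v X = B) \<and>
        A *\<^sub>v vec s' (\<lambda>k. Cs (fst (spec_nonnull ! k)) (snd (spec_nonnull ! k))) = B"
proof -
  interpret constacyclic_spectrum h M N l1 l2 \<gamma> \<beta> \<zeta>1 \<zeta>2 C
    using field_embedding_imp_field_hom[OF hemb] MN cop lam gam bet z1 z2 code
    by (simp add: constacyclic_spectrum_def constacyclic_spectrum_axioms_def)
  define E where "E = {(i, j). i < M \<and> j < N \<and> e i j \<noteq> 0}"
  have E: "finite E" "card E < min_distance M N C"
    using tpos tbound unfolding E_def dist
    by (auto intro: finite_subset[of _ "{..<M} \<times> {..<N}"])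
  have spec_grid: "set spec_nonnull \<subseteq> {..<M} \<times> {..<N}"
    and spec_nonnull: "\<And>\<theta> \<phi>. (\<theta>, \<phi>) \<in> set spec_nonnull \<Longrightarrow>
       (\<gamma> * \<zeta>1 ^ \<theta>, \<beta> * \<zeta>2 ^ \<phi>) \<notin> common_zero_set h M N l1 l2 C"
    and spec_null: "\<And>\<theta> \<phi>. \<theta> < M \<Longrightarrow> \<phi> < N \<Longrightarrow> (\<theta>, \<phi>) \<notin> set spec_nonnull \<Longrightarrow>
       (\<gamma> * \<zeta>1 ^ \<theta>, \<beta> * \<zeta>2 ^ \<phi>) \<in> common_zero_set h M N l1 l2 C"
    using enum_spec(2) unfolding Omega_def by auto
  have err_free_zero: "\<And>i j. (i, j) \<in> set err_free \<Longrightarrow> i < M \<and> j < N \<and> e i j = 0"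
    and err_free_cover: "\<And>i j. i < M \<Longrightarrow> j < N \<Longrightarrow> (i, j) \<notin> E \<Longrightarrow> (i, j) \<in> set err_free"
    using enum_err(2) unfolding Omega_def E_def by auto
  note solution = system_matrix_mult_spectrum[OF cC enum_spec(1) spec_grid spec_null err_free_zero]
  show ?thesis
    unfolding Let_def spectrum2_eq_dft system_matrix_def[symmetric]
  proof (intro conjI mult_mat_vec_unique_solution[OF _ _ solution])
    show "system_matrix spec_nonnull err_free \<in> carrier_mat (length err_free) (length spec_nonnull)"
      by (simp add: system_matrix_def)
  qed (auto intro: solution system_matrix_kernel_trivial[OF enum_spec(1) spec_grid spec_nonnull E err_free_cover])
qed

end
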